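(* Let $G$ be a word-representable graph. Then for all $n\ge 3$, $l(G \,\square\, K_n) \le n\,l(G) + (n^2-1)|G|$.
   Context: All graphs are simple and undirected; $|G|$ denotes the number of vertices of $G$ and $K_n$ is the complete graph on $n$ vertices. Letters $x,y$ alternate in a word $w$ if deleting all other letters from $w$ yields $xyxy\ldots$ or $yxyx\ldots$ (of either parity). A word $w$ over $V(G)$ represents $G$ if every vertex occurs in $w$ and for all distinct $x,y$, $xy\in E(G)$ iff $x,y$ alternate in $w$; $G$ is word-representable if such a word exists, and $l(G)$ is the minimum length of a word representing $G$. The Cartesian product $G\,\square\,H$ has vertex set $V(G)\times V(H)$, with $(u,v)$ adjacent to $(u',v')$ iff either $u=u'$ and $vv'\in E(H)$, or $v=v'$ and $uu'\in E(G)$. *)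

theory Defs
  imports Main
begin

definition simple_graph :: "'a set \<Rightarrow> ('a \<Rightarrow> 'a \<Rightarrow> bool) \<Rightarrow> bool" where
  "simple_graph V E \<longleftrightarrow> finite V \<and> (\<forall>x y. E x y \<longrightarrow> x \<in> V \<and> y \<in> V)
     \<and> (\<forall>x y. E x y \<longrightarrow> E y x) \<and> (\<forall>x. \<not> E x x)"

definition alternate :: "'a list \<Rightarrow> 'a \<Rightarrow> 'a \<Rightarrow> bool" where
  "alternate w x y \<longleftrightarrow>
     (let u = filter (\<lambda>z. z = x \<or> z = y) w in
      \<forall>i. Suc i < length u \<longrightarrow> u ! i \<noteq> u ! Suc i)"

definition represents :: "'a set \<Rightarrow> ('a \<Rightarrow> 'a \<Rightarrow> bool) \<Rightarrow> 'a list \<Rightarrow> bool" where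
  "represents V E w \<longleftrightarrow> set w = V \<and>
     (\<forall>x\<in>V. \<forall>y\<in>V. x \<noteq> y \<longrightarrow> (E x y \<longleftrightarrow> alternate w x y))"

definition word_representable :: "'a set \<Rightarrow> ('a \<Rightarrow> 'a \<Rightarrow> bool) \<Rightarrow> bool" where
  "word_representable V E \<longleftrightarrow> (\<exists>w. represents V E w)"

definition min_rep_length :: "'a set \<Rightarrow> ('a \<Rightarrow> 'a \<Rightarrow> bool) \<Rightarrow> nat" where
  "min_rep_length V E = (LEAST k. \<exists>w. represents V E w \<and> length w = k)"

definition K_V :: "nat \<Rightarrow> nat set" where
  "K_V n = {..<n}"

definition K_E :: "nat \<Rightarrow> nat \<Rightarrow> nat \<Rightarrow> bool" where
  "K_E n i j \<longleftrightarrow> i < n \<and> j < n \<and> i \<noteq> j"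

definition cprod_V :: "'a set \<Rightarrow> 'b set \<Rightarrow> ('a \<times> 'b) set" where
  "cprod_V V1 V2 = V1 \<times> V2"

definition cprod_E :: "'a set \<Rightarrow> ('a \<Rightarrow> 'a \<Rightarrow> bool) \<Rightarrow> 'b set \<Rightarrow> ('b \<Rightarrow> 'b \<Rightarrow> bool)
    \<Rightarrow> 'a \<times> 'b \<Rightarrow> 'a \<times> 'b \<Rightarrow> bool" where
  "cprod_E V1 E1 V2 E2 p q \<longleftrightarrow>
     (fst p = fst q \<and> fst p \<in> V1 \<and> E2 (snd p) (snd q)) \<or>
     (snd p = snd q \<and> snd p \<in> V2 \<and> E1 (fst p) (fst q))"

end

theory Submission
  imports Defs
begin

(* Let w represent G and let ord list the vertices of G in the order of their first occurrence
   in w. The word for G \<box> K_n is P S. The suffix S replaces every letter x of w by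
   (x,0) (x,1) ... (x,n-1). The prefix P consists of segments k = 1, ..., n-1: segment k lists,
   for each x in ord, the rotation (x,k) ... (x,n-1) (x,0) ... (x,k-1), and then (x,k) for each
   x in ord. This has n l(G) + (n^2-1)|G| letters.
   Restricted to the copies of one vertex, P S reads 1, 2, ..., n-1 followed by full periods
   0, 1, ..., n-1, so any two copies alternate. For copies (u,i), (v,j) of distinct vertices, u
   before v in ord, segment k restricts to (u,i) (v,j), followed by (u,i) if k = i and by (v,j)
   if k = j, while S restricts to the pattern of u, v in w, which starts with u. If i = j the
   segments only repeat (u,i) (v,i), so alternation is that of u, v in w; if i \<noteq> j, segment
   i or segment j produces two equal neighbours. *)

lemma alternate_iff_distinct_adj:
  "alternate w x y \<longleftrightarrow> distinct_adj (filter (\<lambda>z. z = x \<or> z = y) w)"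
  unfolding alternate_def Let_def distinct_adj_conv_nth ..

lemma alternate_commute: "alternate w x y \<longleftrightarrow> alternate w y x"
  unfolding alternate_iff_distinct_adj by (simp add: disj_commute)

lemma filter_eq_singleton_if_distinct:
  "distinct xs \<Longrightarrow> x \<in> set xs \<Longrightarrow> filter (\<lambda>y. y = x) xs = [x]"
  by (induction xs) (auto simp: filter_empty_conv)

lemma distinct_set_doubleton_cases:
  assumes "distinct xs" "set xs = {x, y}" "x \<noteq> y"
  shows "xs = [x, y] \<or> xs = [y, x]"
proof -
  have "length xs = 2"
    using distinct_card[OF assms(1)] assms(2,3) by simp
  then obtain a b where "xs = [a, b]"
    by (auto simp: numeral_2_eq_2 length_Suc_conv)
  then show ?thesis
    using assms(2) by (auto simp: doubleton_eq_iff)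
qed

lemma distinct_adj_concat_replicate_append:
  assumes "a \<noteq> b" "distinct_adj ys" "ys = [] \<or> hd ys = a"
  shows "distinct_adj (concat (replicate m [a, b]) @ ys)"
proof (induction m)
  case (Suc m)
  have "concat (replicate m [a, b]) @ ys = [] \<or> hd (concat (replicate m [a, b]) @ ys) = a"
    using assms(3) by (cases m) auto
  then show ?case
    using Suc assms(1) by (auto simp: distinct_adj_Cons)
qed (use assms in simp)

lemma distinct_adj_filter_concat_replicate_upt:
  assumes "i \<noteq> j" "i < n" "j < n"
  shows "distinct_adj (filter (\<lambda>t. t = i \<or> t = j) (concat (replicate m [0..<n])))"
proof -
  have "filter (\<lambda>t. t = i \<or> t = j) [0..<n] = [i, j] \<or> filter (\<lambda>t. t = i \<or> t = j) [0..<n] = [j, i]"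
    using assms by (intro distinct_set_doubleton_cases) auto
  then obtain a b where ab: "a \<noteq> b" "filter (\<lambda>t. t = i \<or> t = j) [0..<n] = [a, b]"
    using assms(1) by metis
  have "filter (\<lambda>t. t = i \<or> t = j) (concat (replicate m [0..<n])) = concat (replicate m [a, b])"
    by (simp add: filter_concat ab(2))
  then show ?thesis
    using distinct_adj_concat_replicate_append[of a b "[]" m] ab(1) by simp
qed

lemma concat_map_upt_split:
  assumes "m \<le> k" "k < n"
  shows "concat (map F [m..<n]) = concat (map F [m..<k]) @ F k @ concat (map F [Suc k..<n])"
proof -
  have "[m..<n] = [m..<k] @ k # [Suc k..<n]"
    using assms upt_add_eq_append[of m k "n - k"] upt_conv_Cons[of k n] by simp
  then show ?thesis by simp
qed

lemma hd_rev_remdups_rev: "hd (rev (remdups (rev xs))) = hd xs"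
proof -
  have "last (remdups (rev xs)) = last (rev xs)"
    using remdups_filter_last[of "\<lambda>_. True" "rev xs"] by simp
  then show ?thesis
    by (cases "xs = []") (simp_all add: hd_rev last_rev[of xs])
qed

lemma concat_map_concat_replicate:
  "concat (map (\<lambda>k. concat (replicate (r k) xs)) ks) = concat (replicate (sum_list (map r ks)) xs)"
  by (induction ks) (simp_all add: replicate_add)

lemma rotate_upt: "k < n \<Longrightarrow> rotate k [0..<n] = [k..<n] @ [0..<k]"
  by (simp add: rotate_drop_take)

lemma count_list_distinct: "distinct xs \<Longrightarrow> x \<in> set xs \<Longrightarrow> count_list xs x = 1"
  by (induction xs) auto

definition fiber :: "'a \<Rightarrow> ('a \<times> 'b) list \<Rightarrow> 'b list" where
  "fiber v xs = map snd (filter (\<lambda>z. fst z = v) xs)"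

lemma fiber_append [simp]: "fiber v (xs @ ys) = fiber v xs @ fiber v ys"
  by (simp add: fiber_def)

lemma fiber_concat: "fiber v (concat xss) = concat (map (fiber v) xss)"
  by (induction xss) (auto simp: fiber_def)

lemma alternate_Pair_iff_fiber:
  "alternate xs (v, i) (v, j) \<longleftrightarrow> distinct_adj (filter (\<lambda>t. t = i \<or> t = j) (fiber v xs))"
proof -
  have "filter (\<lambda>z. z = (v, i) \<or> z = (v, j)) xs
      = map (Pair v) (filter (\<lambda>t. t = i \<or> t = j) (fiber v xs))"
    by (induction xs) (auto simp: fiber_def)
  then show ?thesis
    unfolding alternate_iff_distinct_adj by (simp add: distinct_adj_map_iff inj_on_def)
qed

definition blocks :: "'b list \<Rightarrow> 'a list \<Rightarrow> ('a \<times> 'b) list" where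
  "blocks ys xs = concat (map (\<lambda>x. map (Pair x) ys) xs)"

lemma blocks_Nil [simp]: "blocks ys [] = []"
  and blocks_Cons [simp]: "blocks ys (x # xs) = map (Pair x) ys @ blocks ys xs"
  by (simp_all add: blocks_def)

lemma set_blocks [simp]: "set (blocks ys xs) = set xs \<times> set ys"
  by (auto simp: blocks_def)

lemma length_blocks [simp]: "length (blocks ys xs) = length xs * length ys"
  by (induction xs) auto

lemma fiber_blocks: "fiber v (blocks ys xs) = concat (replicate (count_list xs v) ys)"
  by (induction xs) (auto simp: fiber_def comp_def)

lemma filter_blocks:
  assumes "u \<noteq> v"
  shows "filter (\<lambda>z. z = (u, i) \<or> z = (v, j)) (blocks ys xs)
    = concat (map (\<lambda>x. if x = u then map (Pair u) (filter (\<lambda>t. t = i) ys)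
                                 else map (Pair v) (filter (\<lambda>t. t = j) ys))
                 (filter (\<lambda>x. x = u \<or> x = v) xs))"
  using assms by (induction xs) (auto simp: filter_map comp_def)

definition segment :: "nat \<Rightarrow> 'a list \<Rightarrow> nat \<Rightarrow> ('a \<times> nat) list" where
  "segment n ord k = blocks (rotate k [0..<n]) ord @ blocks [k] ord"

definition segments :: "nat \<Rightarrow> 'a list \<Rightarrow> ('a \<times> nat) list" where
  "segments n ord = concat (map (segment n ord) [1..<n])"

(* rev (remdups (rev w)) lists the letters of w in the order of their first occurrence. *)
definition product_word :: "nat \<Rightarrow> 'a list \<Rightarrow> ('a \<times> nat) list" where
  "product_word n w = segments n (rev (remdups (rev w))) @ blocks [0..<n] w"

lemma Cons_0_concat_rotations:
  "m < n \<Longrightarrow> 0 # concat (map (\<lambda>k. rotate k [0..<n] @ [k]) [1..<Suc m])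
    = concat (replicate m [0..<n]) @ [0..<Suc m]"
proof (induction m)
  case (Suc m)
  let ?F = "\<lambda>k. rotate k [0..<n] @ [k]"
  have "[1..<Suc (Suc m)] = [1..<Suc m] @ [Suc m]"
    by simp
  then have "0 # concat (map ?F [1..<Suc (Suc m)]) = (0 # concat (map ?F [1..<Suc m])) @ ?F (Suc m)"
    by simp
  also have "\<dots> = concat (replicate m [0..<n]) @ ([0..<Suc m] @ [Suc m..<n]) @ [0..<Suc m] @ [Suc m]"
    using Suc rotate_upt[OF Suc.prems] by simp
  also have "[0..<Suc m] @ [Suc m..<n] = [0..<n]"
    using Suc.prems upt_add_eq_append[of 0 "Suc m" "n - Suc m"] by simp
  also have "[0..<Suc m] @ [Suc m] = [0..<Suc (Suc m)]"
    by simp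
  finally show ?case
    by (simp add: replicate_append_same[symmetric])
qed simp

lemma fiber_segments:
  assumes "distinct ord" "v \<in> set ord" "0 < n"
  shows "0 # fiber v (segments n ord) = concat (replicate n [0..<n])"
proof -
  have "fiber v (segment n ord k) = rotate k [0..<n] @ [k]" for k
    using assms by (simp add: segment_def fiber_blocks count_list_distinct)
  then have "0 # fiber v (segments n ord) = concat (replicate (n - 1) [0..<n]) @ [0..<n]"
    using Cons_0_concat_rotations[of "n - 1" n] assms(3)
    by (simp add: segments_def fiber_concat comp_def)
  also have "\<dots> = concat (replicate n [0..<n])"
    using assms(3) by (cases n) (simp_all add: replicate_append_same[symmetric])
  finally show ?thesis .
qed

lemma alternate_product_word_same_vertex:
  assumes "v \<in> set w" "i \<noteq> j" "i < n" "j < n"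
  shows "alternate (product_word n w) (v, i) (v, j)"
proof -
  let ?P = "\<lambda>t. t = i \<or> t = j"
  have "0 # fiber v (product_word n w) = concat (replicate (n + count_list w v) [0..<n])"
    using fiber_segments[of "rev (remdups (rev w))" v n] assms
    by (simp add: product_word_def fiber_blocks replicate_add)
  then have "distinct_adj (filter ?P (0 # fiber v (product_word n w)))"
    using distinct_adj_filter_concat_replicate_upt[OF assms(2-4)] by simp
  then show ?thesis
    unfolding alternate_Pair_iff_fiber by (simp split: if_splits add: distinct_adj_ConsD)
qed

lemma filter_segment:
  assumes "u \<noteq> v" "i < n" "j < n" "filter (\<lambda>x. x = u \<or> x = v) ord = [u, v]"
  shows "filter (\<lambda>z. z = (u, i) \<or> z = (v, j)) (segment n ord k)
    = [(u, i), (v, j)] @ (if k = i then [(u, i)] else []) @ (if k = j then [(v, j)] else [])"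
proof -
  have "filter (\<lambda>t. t = i) (rotate k [0..<n]) = [i]" "filter (\<lambda>t. t = j) (rotate k [0..<n]) = [j]"
    using assms(2,3) by (auto intro: filter_eq_singleton_if_distinct)
  then show ?thesis
    using assms(1,4) by (simp add: segment_def filter_blocks)
qed

lemma distinct_adj_segment_pattern_iff:
  assumes "a \<noteq> b" "i < n" "j < n" "S \<noteq> []" "hd S = a"
  shows "distinct_adj (concat (map (\<lambda>k. [a, b] @ (if k = i then [a] else []) @ (if k = j then [b] else []))
      [1..<n]) @ S) \<longleftrightarrow> distinct_adj S \<and> i = j"
    (is "distinct_adj (concat (map ?F [1..<n]) @ S) \<longleftrightarrow> _")
proof (cases "distinct_adj S \<and> i = j")
  case True
  then have "?F = (\<lambda>k. concat (replicate (if k = i then 2 else 1) [a, b]))"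
    by (auto simp: numeral_2_eq_2)
  then show ?thesis
    using True assms(1,5) by (simp add: concat_map_concat_replicate distinct_adj_concat_replicate_append)
next
  case False
  obtain S' where S: "S = a # S'"
    using assms(4,5) by (cases S) auto
  from False consider "\<not> distinct_adj S" | "i \<noteq> j" "j \<noteq> 0" | "i \<noteq> j" "j = 0"
    by blast
  then have "\<not> distinct_adj (concat (map ?F [1..<n]) @ S)"
  proof cases
    case 1
    then show ?thesis by blast
  next
    case 2
    then have "concat (map ?F [1..<n]) = concat (map ?F [1..<j]) @ [a, b, b] @ concat (map ?F [Suc j..<n])"
      using concat_map_upt_split[of 1 j n ?F] assms(3) by simp
    then show ?thesis by auto
  next
    case 3
    then have "concat (map ?F [1..<n]) = concat (map ?F [1..<i]) @ [a, b, a] @ concat (map ?F [Suc i..<n])"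
      using concat_map_upt_split[of 1 i n ?F] assms(2) by simp
    moreover obtain zs where "concat (map ?F [Suc i..<n]) @ S = a # zs"
      using S by (cases "[Suc i..<n]") auto
    ultimately show ?thesis by auto
  qed
  then show ?thesis using False by blast
qed

lemma alternate_segments_append_blocks:
  assumes "u \<noteq> v" "u \<in> set w" "i < n" "j < n"
    and ord: "filter (\<lambda>x. x = u \<or> x = v) ord = [u, v]"
    and first: "hd (filter (\<lambda>x. x = u \<or> x = v) w) = u"
  shows "alternate (segments n ord @ blocks [0..<n] w) (u, i) (v, j) \<longleftrightarrow> alternate w u v \<and> i = j"
proof -
  let ?a = "(u, i)" and ?b = "(v, j)"
  define S where "S = map (\<lambda>x. if x = u then ?a else ?b) (filter (\<lambda>x. x = u \<or> x = v) w)"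
  have "filter (\<lambda>t. t = i) [0..<n] = [i]" "filter (\<lambda>t. t = j) [0..<n] = [j]"
    using assms(3,4) by (auto intro: filter_eq_singleton_if_distinct)
  then have "filter (\<lambda>z. z = ?a \<or> z = ?b) (blocks [0..<n] w)
      = concat (map (\<lambda>x. [if x = u then ?a else ?b]) (filter (\<lambda>x. x = u \<or> x = v) w))"
    unfolding filter_blocks[OF assms(1)] by (intro arg_cong[where f = concat] map_cong) auto
  then have "filter (\<lambda>z. z = ?a \<or> z = ?b) (segments n ord @ blocks [0..<n] w)
      = concat (map (\<lambda>k. [?a, ?b] @ (if k = i then [?a] else []) @ (if k = j then [?b] else []))
          [1..<n]) @ S"
    by (simp add: S_def segments_def filter_concat comp_def filter_segment[OF assms(1,3,4) ord])
  moreover have "distinct_adj S \<longleftrightarrow> alternate w u v"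
    unfolding S_def alternate_iff_distinct_adj using assms(1)
    by (intro distinct_adj_map_iff) (auto simp: inj_on_def)
  moreover have "S \<noteq> [] \<and> hd S = ?a"
    using assms(2) first by (cases "filter (\<lambda>x. x = u \<or> x = v) w") (auto simp: S_def filter_empty_conv)
  ultimately show ?thesis
    unfolding alternate_iff_distinct_adj using distinct_adj_segment_pattern_iff[of ?a ?b i n j S] assms(1,3,4)
    by simp
qed

lemma alternate_product_word_distinct_vertices:
  assumes "u \<noteq> v" "u \<in> set w" "v \<in> set w" "i < n" "j < n"
  shows "alternate (product_word n w) (u, i) (v, j) \<longleftrightarrow> alternate w u v \<and> i = j"
proof -
  let ?ord = "rev (remdups (rev w))"
  have first: "hd (filter P ?ord) = hd (filter P w)" for P
    using hd_rev_remdups_rev[of "filter P w"] by (simp add: rev_filter remdups_filter)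
  have "filter (\<lambda>x. x = u \<or> x = v) ?ord = [u, v] \<or> filter (\<lambda>x. x = u \<or> x = v) ?ord = [v, u]"
    using assms(1-3) by (intro distinct_set_doubleton_cases) auto
  then show ?thesis
  proof
    assume "filter (\<lambda>x. x = u \<or> x = v) ?ord = [u, v]"
    then show ?thesis
      using alternate_segments_append_blocks[OF assms(1,2,4,5)] first[of "\<lambda>x. x = u \<or> x = v"]
      by (simp add: product_word_def)
  next
    assume "filter (\<lambda>x. x = u \<or> x = v) ?ord = [v, u]"
    then have "filter (\<lambda>x. x = v \<or> x = u) ?ord = [v, u]"
      by (simp add: disj_commute)
    then have "alternate (product_word n w) (v, j) (u, i) \<longleftrightarrow> alternate w v u \<and> j = i"
      using alternate_segments_append_blocks[of v u w j n i] assms first[of "\<lambda>x. x = v \<or> x = u"]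
      by (simp add: product_word_def)
    then show ?thesis
      by (metis alternate_commute)
  qed
qed

lemma set_product_word: "set (product_word n w) = set w \<times> {..<n}"
  by (auto simp: product_word_def segments_def segment_def)

lemma length_segments: "length (segments n ord) = (n\<^sup>2 - 1) * length ord"
proof -
  have "length (segments n ord) = (n - 1) * ((n + 1) * length ord)"
    by (simp add: segments_def segment_def length_concat comp_def sum_list_triv)
  also have "\<dots> = (n\<^sup>2 - 1) * length ord"
    by (cases n) (simp_all add: power2_eq_square algebra_simps)
  finally show ?thesis .
qed

lemma length_product_word: "length (product_word n w) = n * length w + (n\<^sup>2 - 1) * card (set w)"
  by (simp add: product_word_def length_segments length_remdups_card_conv)

lemma represents_product_word:
  assumes "represents V E w"
  shows "represents (cprod_V V (K_V n)) (cprod_E V E (K_V n) (K_E n)) (product_word n w)"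
  unfolding represents_def
proof (intro conjI ballI impI)
  have set_w: "set w = V"
    using assms by (simp add: represents_def)
  then show "set (product_word n w) = cprod_V V (K_V n)"
    by (simp add: set_product_word cprod_V_def K_V_def)
  fix p q
  assume "p \<in> cprod_V V (K_V n)" "q \<in> cprod_V V (K_V n)" "p \<noteq> q"
  then obtain u i v j where pq: "p = (u, i)" "q = (v, j)" "u \<in> V" "v \<in> V" "i < n" "j < n"
    by (auto simp: cprod_V_def K_V_def)
  show "cprod_E V E (K_V n) (K_E n) p q \<longleftrightarrow> alternate (product_word n w) p q"
  proof (cases "u = v")
    case True
    then show ?thesis
      using pq \<open>p \<noteq> q\<close> set_w alternate_product_word_same_vertex[of u w i j n]
      by (auto simp: cprod_E_def K_E_def)
  next
    case False
    have "E u v \<longleftrightarrow> alternate w u v"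
      using assms pq(3,4) False by (simp add: represents_def)
    then show ?thesis
      using pq False set_w alternate_product_word_distinct_vertices[OF False, of w i n j]
      by (auto simp: cprod_E_def K_V_def)
  qed
qed

theorem mainTheorem6:
  fixes V :: "'a set" and E :: "'a \<Rightarrow> 'a \<Rightarrow> bool" and n :: nat
  assumes "simple_graph V E"
    and "word_representable V E"
    and "n \<ge> 3"
  shows "word_representable (cprod_V V (K_V n)) (cprod_E V E (K_V n) (K_E n))
    \<and> min_rep_length (cprod_V V (K_V n)) (cprod_E V E (K_V n) (K_E n))
        \<le> n * min_rep_length V E + (n ^ 2 - 1) * card V"
proof -
  obtain w where rep: "represents V E w" and len: "length w = min_rep_length V E"
    using assms(2) LeastI_ex[of "\<lambda>k. \<exists>w. represents V E w \<and> length w = k"]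
    unfolding word_representable_def min_rep_length_def by blast
  let ?W = "product_word n w"
  have rep_W: "represents (cprod_V V (K_V n)) (cprod_E V E (K_V n) (K_E n)) ?W"
    using represents_product_word[OF rep] .
  then have "min_rep_length (cprod_V V (K_V n)) (cprod_E V E (K_V n) (K_E n)) \<le> length ?W"
    unfolding min_rep_length_def by (blast intro: Least_le)
  also have "length ?W = n * min_rep_length V E + (n ^ 2 - 1) * card V"
    using rep len by (simp add: length_product_word represents_def)
  finally show ?thesis
    using rep_W unfolding word_representable_def by blast
qed

end
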